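(* (i) For every $K>0$ and every stable phase-locked steady state $\theta^*$ of the Kuramoto network with coupling strength $K$, one has $r_{\rm uni}(\theta^* )>0$. (ii) If $K\mapsto\theta^*(K)$, $K\in I$ ($I\subset(0,\infty)$ an open interval), is a continuously differentiable family of stable phase-locked steady states, then $K\mapsto r_{\rm uni}(\theta^*(K))$ is monotonically non-decreasing on $I$, and if $\omega\neq 0$ it is strictly increasing, with $\frac{d r_{\rm uni}(\theta^*(K))}{dK}>0$ for all $K\in I$.
   Context: Kuramoto network: $N\ge 2$ oscillators with phases $\theta_i(t)$ obeying $\frac{d\theta_i}{dt}=\omega_i+K\sum_{j=1}^N A_{i,j}\sin(\theta_j-\theta_i)$, where $\omega=(\omega_1,\dots,\omega_N)^T\in\mathbb{R}^N$ are natural frequencies with $\sum_{i=1}^N\omega_i=0$, $K>0$ is the coupling strength, and $A=(A_{i,j})$ is the symmetric adjacency matrix ($A_{i,j}=A_{j,i}\in\{0,1\}$, $A_{i,i}=0$) of a connected undirected graph; $k_i=\sum_j A_{i,j}$ is the degree of node $i$. A phase-locked steady state is a vector $\theta^*\in\mathbb{R}^N$ with $\omega_i+K\sum_j A_{i,j}\sin(\theta_j^*-\theta_i^* )=0$ for all $i$. Its Jacobian $J$ is the symmetric matrix with $J_{i,j}=KA_{i,j}\cos(\theta_i^*-\theta_j^* )$ for $i\neq j$ and $J_{i,i}=-K\sum_j A_{i,j}\cos(\theta_i^*-\theta_j^* )$; it always has eigenvalue $\lambda_1=0$ with eigenvector $(1,\dots,1)^T$. The state is called stable if all remaining eigenvalues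 $\lambda_2,\dots,\lambda_N$ of $J$ are strictly negative. The order parameter is $r_{\rm uni}=\frac{1}{\sum_i k_i}\sum_{i,j}A_{i,j}\langle\cos(\theta_i-\theta_j)\rangle_t$, which for a steady state equals $r_{\rm uni}(\theta^* )=\frac{1}{\sum_i k_i}\sum_{i,j}A_{i,j}\cos(\theta_i^*-\theta_j^* )$. *)

theory Defs
  imports Complex_Main "Jordan_Normal_Form.Char_Poly"
begin

text \<open>Oscillators are indexed by 0..N-1. Adjacency matrix A, natural frequencies om,
phases th are functions on nat, only their values below N matter.\<close>

definition adjacency_ok :: "nat \<Rightarrow> (nat \<Rightarrow> nat \<Rightarrow> real) \<Rightarrow> bool" where
  "adjacency_ok N A \<longleftrightarrow>
     (\<forall>i<N. \<forall>j<N. A i j = A j i \<and> (A i j = 0 \<or> A i j = 1)) \<and> (\<forall>i<N. A i i = 0)"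

definition graph_connected :: "nat \<Rightarrow> (nat \<Rightarrow> nat \<Rightarrow> real) \<Rightarrow> bool" where
  "graph_connected N A \<longleftrightarrow>
     (\<forall>i<N. \<forall>j<N. (\<lambda>x y. x < N \<and> y < N \<and> A x y = 1)\<^sup>*\<^sup>* i j)"

definition degree :: "nat \<Rightarrow> (nat \<Rightarrow> nat \<Rightarrow> real) \<Rightarrow> nat \<Rightarrow> real" where
  "degree N A i = (\<Sum>j<N. A i j)"

definition steady_state ::
  "nat \<Rightarrow> (nat \<Rightarrow> nat \<Rightarrow> real) \<Rightarrow> (nat \<Rightarrow> real) \<Rightarrow> real \<Rightarrow> (nat \<Rightarrow> real) \<Rightarrow> bool" where
  "steady_state N A om K th \<longleftrightarrow>
     (\<forall>i<N. om i + K * (\<Sum>j<N. A i j * sin (th j - th i)) = 0)"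

definition jacobian ::
  "nat \<Rightarrow> (nat \<Rightarrow> nat \<Rightarrow> real) \<Rightarrow> real \<Rightarrow> (nat \<Rightarrow> real) \<Rightarrow> real mat" where
  "jacobian N A K th = mat N N (\<lambda>(i, j).
     if i = j then - K * (\<Sum>l<N. A i l * cos (th i - th l))
     else K * A i j * cos (th i - th j))"

text \<open>Stability: the eigenvalues of J, counted with algebraic multiplicity, are
lambda_1 = 0 and lambda_2, ..., lambda_N, all strictly negative.\<close>
definition stable_jac :: "nat \<Rightarrow> real mat \<Rightarrow> bool" where
  "stable_jac N J \<longleftrightarrow>
     (\<exists>ls :: real list. length ls = N - 1 \<and> (\<forall>l\<in>set ls. l < 0) \<and>
        char_poly J = (\<Prod>l\<leftarrow>0 # ls. [:- l, 1:]))"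

definition stable_steady_state ::
  "nat \<Rightarrow> (nat \<Rightarrow> nat \<Rightarrow> real) \<Rightarrow> (nat \<Rightarrow> real) \<Rightarrow> real \<Rightarrow> (nat \<Rightarrow> real) \<Rightarrow> bool" where
  "stable_steady_state N A om K th \<longleftrightarrow>
     steady_state N A om K th \<and> stable_jac N (jacobian N A K th)"

definition r_uni :: "nat \<Rightarrow> (nat \<Rightarrow> nat \<Rightarrow> real) \<Rightarrow> (nat \<Rightarrow> real) \<Rightarrow> real" where
  "r_uni N A th = (\<Sum>i<N. \<Sum>j<N. A i j * cos (th i - th j)) / (\<Sum>i<N. degree N A i)"

end

theory Submission
  imports Defs "HOL-Analysis.Function_Topology"
begin

(*
  Stability makes the Jacobian J of a phase-locked state a symmetric negative semidefinite matrix,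
  and J is not zero since it has a negative eigenvalue. Its diagonal entries are -K times the weighted
  degrees \<Sum>j A i j cos (th i - th j), whose sum is the numerator of r_uni; they are nonnegative, and
  they cannot all vanish because a negative semidefinite matrix with zero diagonal is zero.

  Along a differentiable branch th(K) of steady states, differentiating the steady-state equations
  gives coupling(th) = - J th', and the derivative of r_uni is -2 th'\<^sup>T J th' / \<Sum> degrees \<ge> 0.
  If it vanishes, then J th' = 0, so all coupling terms vanish and with them om = - K coupling.
*)

section \<open>Quadratic forms of symmetric matrices\<close>

definition mat_vec :: "nat \<Rightarrow> (nat \<Rightarrow> nat \<Rightarrow> real) \<Rightarrow> (nat \<Rightarrow> real) \<Rightarrow> nat \<Rightarrow> real" where
  "mat_vec N M v i = (\<Sum>j<N. M i j * v j)"

definition quad_form :: "nat \<Rightarrow> (nat \<Rightarrow> nat \<Rightarrow> real) \<Rightarrow> (nat \<Rightarrow> real) \<Rightarrow> real" where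
  "quad_form N M v = (\<Sum>i<N. v i * mat_vec N M v i)"

definition symmetric_on :: "nat \<Rightarrow> (nat \<Rightarrow> nat \<Rightarrow> real) \<Rightarrow> bool" where
  "symmetric_on N M \<longleftrightarrow> (\<forall>i<N. \<forall>j<N. M i j = M j i)"

lemma bilinear_form_commute:
  assumes "symmetric_on N M"
  shows "(\<Sum>i<N. w i * mat_vec N M v i) = (\<Sum>i<N. v i * mat_vec N M w i)"
proof -
  have "(\<Sum>i<N. w i * mat_vec N M v i) = (\<Sum>i<N. \<Sum>j<N. M i j * w i * v j)"
    unfolding mat_vec_def sum_distrib_left by (simp add: ac_simps)
  also have "\<dots> = (\<Sum>j<N. \<Sum>i<N. M j i * v j * w i)"
    using assms unfolding symmetric_on_def
    by (subst sum.swap) (intro sum.cong refl, metis lessThan_iff mult.commute mult.assoc)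
  also have "\<dots> = (\<Sum>j<N. v j * mat_vec N M w j)"
    unfolding mat_vec_def sum_distrib_left by (simp add: ac_simps)
  finally show ?thesis .
qed

lemma quad_form_add_scaled:
  assumes "symmetric_on N M"
  shows "quad_form N M (\<lambda>i. v i + t * w i)
       = quad_form N M v + 2 * t * (\<Sum>i<N. w i * mat_vec N M v i) + t\<^sup>2 * quad_form N M w"
proof -
  have mv: "mat_vec N M (\<lambda>i. v i + t * w i) i = mat_vec N M v i + t * mat_vec N M w i" for i
    unfolding mat_vec_def by (simp add: algebra_simps sum.distrib sum_distrib_left)
  have "quad_form N M (\<lambda>i. v i + t * w i)
      = quad_form N M v + t * (\<Sum>i<N. w i * mat_vec N M v i)
        + t * (\<Sum>i<N. v i * mat_vec N M w i) + t\<^sup>2 * quad_form N M w"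
    unfolding quad_form_def mv
    by (simp add: algebra_simps power2_eq_square sum.distrib sum_distrib_left)
  then show ?thesis
    using bilinear_form_commute[OF assms, of w v] by simp
qed

lemma nonpos_if_linear_plus_quadratic_nonpos:
  fixes a b :: real
  assumes "\<And>t. t > 0 \<Longrightarrow> a * t + b * t\<^sup>2 \<le> 0"
  shows "a \<le> 0"
proof (rule ccontr)
  assume "\<not> a \<le> 0"
  define t where "t = a / (\<bar>b\<bar> + 1)"
  have t: "t > 0" and "t * \<bar>b\<bar> < a"
    using \<open>\<not> a \<le> 0\<close> unfolding t_def by (simp_all add: field_simps)
  then have "\<bar>b\<bar> * t\<^sup>2 < a * t"
    by (simp add: power2_eq_square mult.commute mult.left_commute)
  moreover have "- \<bar>b\<bar> * t\<^sup>2 \<le> b * t\<^sup>2"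
    by (rule mult_right_mono) auto
  ultimately have "a * t + b * t\<^sup>2 > 0" by linarith
  with assms[OF t] show False by linarith
qed

lemma mat_vec_eq_0_if_quad_form_max:
  assumes sym: "symmetric_on N M"
    and nonpos: "\<And>u. quad_form N M u \<le> 0" and zero: "quad_form N M v = 0"
    and i: "i < N"
  shows "mat_vec N M v i = 0"
proof -
  define w where "w = mat_vec N M v"
  have "(2 * (\<Sum>i<N. (w i)\<^sup>2)) * t + quad_form N M w * t\<^sup>2 \<le> 0" if "t > 0" for t
    using nonpos[of "\<lambda>i. v i + t * w i"]
    unfolding quad_form_add_scaled[OF sym] zero w_def
    by (simp add: algebra_simps power2_eq_square)
  then have "2 * (\<Sum>i<N. (w i)\<^sup>2) \<le> 0"
    by (rule nonpos_if_linear_plus_quadratic_nonpos)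
  moreover have "0 \<le> (\<Sum>i<N. (w i)\<^sup>2)"
    by (simp add: sum_nonneg)
  ultimately have "(\<Sum>i<N. (w i)\<^sup>2) = 0" by linarith
  with i show ?thesis by (simp add: sum_nonneg_eq_0_iff w_def)
qed

lemma mat_vec_unit: "k < N \<Longrightarrow> mat_vec N M (\<lambda>j. of_bool (j = k)) i = M i k"
  by (simp add: mat_vec_def)

lemma quad_form_unit: "k < N \<Longrightarrow> quad_form N M (\<lambda>i. of_bool (i = k)) = M k k"
  by (simp add: quad_form_def mat_vec_unit)

lemma entries_0_if_diag_0:
  assumes sym: "symmetric_on N M" and nonpos: "\<And>u. quad_form N M u \<le> 0"
    and diag: "\<And>k. k < N \<Longrightarrow> M k k = 0" and "i < N" "k < N"
  shows "M i k = 0"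
  using mat_vec_eq_0_if_quad_form_max[OF sym nonpos, of "\<lambda>j. of_bool (j = k)" i] assms
  by (simp add: quad_form_unit mat_vec_unit)

section \<open>The largest eigenvalue of a symmetric matrix\<close>

lemma compact_unit_sphere_coords:
  "compact {v :: nat \<Rightarrow> real. (\<forall>i\<ge>N. v i = 0) \<and> (\<Sum>i<N. (v i)\<^sup>2) = 1}"
proof -
  let ?B = "\<lambda>i. if i < N then {-1..1 :: real} else {0}"
  have "compactin (product_topology (\<lambda>_. euclidean) UNIV) (PiE UNIV ?B)"
    by (subst compactin_PiE) auto
  then have box: "compact (PiE UNIV ?B)"
    by (metis compactin_euclidean_iff euclidean_product_topology)
  have sphere: "closed {v :: nat \<Rightarrow> real. (\<Sum>i<N. (v i)\<^sup>2) = 1}"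
    by (intro closed_Collect_eq continuous_intros)
      (auto simp: continuous_on_product_coordinates)
  have "\<bar>v i\<bar> \<le> 1" if "(\<Sum>i<N. (v i)\<^sup>2) = 1" "i < N" for v :: "nat \<Rightarrow> real" and i
  proof -
    have "(v i)\<^sup>2 \<le> (\<Sum>i<N. (v i)\<^sup>2)"
      by (rule member_le_sum) (use that in auto)
    with that show ?thesis using abs_le_square_iff[of "v i" 1] by simp
  qed
  then have "{v :: nat \<Rightarrow> real. (\<forall>i\<ge>N. v i = 0) \<and> (\<Sum>i<N. (v i)\<^sup>2) = 1}
      = PiE UNIV ?B \<inter> {v. (\<Sum>i<N. (v i)\<^sup>2) = 1}"
    by (auto simp: PiE_iff abs_le_iff split: if_splits)
  then show ?thesis using compact_Int_closed[OF box sphere] by simp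
qed

lemma quad_form_cong: "(\<And>i. i < N \<Longrightarrow> u i = v i) \<Longrightarrow> quad_form N M u = quad_form N M v"
  unfolding quad_form_def mat_vec_def by (intro sum.cong) auto

lemma quad_form_scale: "quad_form N M (\<lambda>i. c * u i) = c\<^sup>2 * quad_form N M u"
  unfolding quad_form_def mat_vec_def
  by (simp add: sum_distrib_left power2_eq_square ac_simps)

lemma mat_vec_shift:
  "i < N \<Longrightarrow> mat_vec N (\<lambda>i j. M i j - of_bool (i = j) * mu) v i = mat_vec N M v i - mu * v i"
  unfolding mat_vec_def by (simp add: left_diff_distrib sum_subtractf mult.assoc)

lemma quad_form_shift:
  "quad_form N (\<lambda>i j. M i j - of_bool (i = j) * mu) v = quad_form N M v - mu * (\<Sum>i<N. (v i)\<^sup>2)"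
proof -
  have "quad_form N (\<lambda>i j. M i j - of_bool (i = j) * mu) v
      = (\<Sum>i<N. v i * mat_vec N M v i - mu * (v i)\<^sup>2)"
    unfolding quad_form_def
    by (intro sum.cong refl) (simp add: mat_vec_shift right_diff_distrib power2_eq_square)
  then show ?thesis
    by (simp add: quad_form_def sum_subtractf sum_distrib_left)
qed

lemma exists_quad_form_max:
  assumes "N \<ge> 1"
  shows "\<exists>mu v. (\<Sum>i<N. (v i)\<^sup>2) = 1 \<and> quad_form N M v = mu
           \<and> (\<forall>u. quad_form N M u \<le> mu * (\<Sum>i<N. (u i)\<^sup>2))"
proof -
  define S where "S = {v :: nat \<Rightarrow> real. (\<forall>i\<ge>N. v i = 0) \<and> (\<Sum>i<N. (v i)\<^sup>2) = 1}"
  have "(\<lambda>i. of_bool (i = 0)) \<in> S"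
    using assms by (simp add: S_def power2_eq_square)
  moreover have "continuous_on S (quad_form N M)"
  proof -
    have "continuous_on UNIV (quad_form N M)"
      unfolding quad_form_def mat_vec_def
      by (intro continuous_intros) (auto simp: continuous_on_product_coordinates)
    then show ?thesis by (rule continuous_on_subset) simp
  qed
  ultimately obtain v where v: "v \<in> S" and max: "\<And>u. u \<in> S \<Longrightarrow> quad_form N M u \<le> quad_form N M v"
    using continuous_attains_sup[OF compact_unit_sphere_coords[of N, folded S_def]] by blast
  have "quad_form N M u \<le> quad_form N M v * (\<Sum>i<N. (u i)\<^sup>2)" for u
  proof (cases "\<forall>i<N. u i = 0")
    case True
    then show ?thesis by (simp add: quad_form_def mat_vec_def)
  next
    case False
    define s where "s = (\<Sum>i<N. (u i)\<^sup>2)"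
    from False obtain k where "k < N" "u k \<noteq> 0" by blast
    then have "s > 0"
      unfolding s_def by (intro sum_pos2[of _ k]) auto
    define u' where "u' i = (if i < N then u i / sqrt s else 0)" for i
    have "(\<Sum>i<N. (u' i)\<^sup>2) = (\<Sum>i<N. (u i)\<^sup>2) / s"
      using \<open>s > 0\<close> by (simp add: u'_def power_divide sum_divide_distrib)
    then have "u' \<in> S" using \<open>s > 0\<close> by (simp add: S_def u'_def s_def)
    moreover have "quad_form N M u' = quad_form N M u / s"
    proof -
      have "quad_form N M u' = quad_form N M (\<lambda>i. (1 / sqrt s) * u i)"
        by (rule quad_form_cong) (simp add: u'_def)
      with quad_form_scale[of N M "1 / sqrt s" u] \<open>s > 0\<close> show ?thesis
        by (simp add: power_divide)
    qed
    ultimately show ?thesis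
      using max[of u'] \<open>s > 0\<close> by (simp add: s_def pos_divide_le_eq mult.commute)
  qed
  with v show ?thesis by (auto simp: S_def)
qed

lemma exists_top_eigenvector:
  assumes sym: "symmetric_on N M" and "N \<ge> 1"
  obtains mu v where "\<And>i. i < N \<Longrightarrow> mat_vec N M v i = mu * v i" and "\<exists>i<N. v i \<noteq> 0"
    and "\<And>u. quad_form N M u \<le> mu * (\<Sum>i<N. (u i)\<^sup>2)"
proof -
  obtain mu v where unit: "(\<Sum>i<N. (v i)\<^sup>2) = 1" and "quad_form N M v = mu"
    and max: "\<And>u. quad_form N M u \<le> mu * (\<Sum>i<N. (u i)\<^sup>2)"
    using exists_quad_form_max[OF \<open>N \<ge> 1\<close>, of M] by blast
  \<comment> \<open>v maximises the quadratic form of M - mu I, whose maximum is 0\<close>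
  let ?M' = "\<lambda>i j. M i j - of_bool (i = j) * mu"
  have "symmetric_on N ?M'"
    using sym by (simp add: symmetric_on_def)
  moreover have "quad_form N ?M' u \<le> 0" for u
    using max[of u] by (simp add: quad_form_shift)
  moreover have "quad_form N ?M' v = 0"
    using \<open>quad_form N M v = mu\<close> unit by (simp add: quad_form_shift)
  ultimately have "mat_vec N M v i = mu * v i" if "i < N" for i
    using mat_vec_eq_0_if_quad_form_max[of N ?M' v i] that by (simp add: mat_vec_shift)
  moreover have "\<exists>i<N. v i \<noteq> 0"
    using unit by (metis (no_types, lifting) lessThan_iff power_zero_numeral sum.neutral zero_neq_one)
  ultimately show ?thesis using that max by blast
qed

lemma mult_mat_vec_vec_nth:
  fixes M :: "real mat"
  assumes "M \<in> carrier_mat N N" and "i < N"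
  shows "(M *\<^sub>v Matrix.vec N v) $ i = mat_vec N (\<lambda>i j. M $$ (i, j)) v i"
  using assms by (simp add: mat_vec_def mult_mat_vec_def scalar_prod_def atLeast0LessThan mult.commute)

lemma eigenvalue_iff_mat_vec:
  fixes M :: "real mat"
  assumes M: "M \<in> carrier_mat N N"
  shows "eigenvalue M l \<longleftrightarrow>
    (\<exists>v. (\<exists>i<N. v i \<noteq> 0) \<and> (\<forall>i<N. mat_vec N (\<lambda>i j. M $$ (i, j)) v i = l * v i))"
proof
  assume "eigenvalue M l"
  then obtain w where w: "w \<in> carrier_vec N" "w \<noteq> 0\<^sub>v N" "M *\<^sub>v w = l \<cdot>\<^sub>v w"
    using M unfolding eigenvalue_def eigenvector_def by auto
  have "w = Matrix.vec N (vec_index w)"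
    using w(1) by auto
  then have "\<forall>i<N. mat_vec N (\<lambda>i j. M $$ (i, j)) (vec_index w) i = l * w $ i"
    using w by (metis M carrier_vecD index_smult_vec(1) mult_mat_vec_vec_nth)
  moreover have "\<exists>i<N. w $ i \<noteq> 0"
    using w(1,2) by (metis carrier_vecD eq_vecI index_zero_vec)
  ultimately show "\<exists>v. (\<exists>i<N. v i \<noteq> 0) \<and> (\<forall>i<N. mat_vec N (\<lambda>i j. M $$ (i, j)) v i = l * v i)"
    by blast
next
  assume "\<exists>v. (\<exists>i<N. v i \<noteq> 0) \<and> (\<forall>i<N. mat_vec N (\<lambda>i j. M $$ (i, j)) v i = l * v i)"
  then obtain v where nz: "\<exists>i<N. v i \<noteq> 0"
    and ev: "\<forall>i<N. mat_vec N (\<lambda>i j. M $$ (i, j)) v i = l * v i" by blast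
  have "eigenvector M (Matrix.vec N v) l"
    unfolding eigenvector_def
  proof (intro conjI)
    show "Matrix.vec N v \<in> carrier_vec (dim_row M)"
      using M by simp
    show "Matrix.vec N v \<noteq> 0\<^sub>v (dim_row M)"
      using M nz by (metis carrier_matD(1) index_vec index_zero_vec(1))
    show "M *\<^sub>v Matrix.vec N v = l \<cdot>\<^sub>v Matrix.vec N v"
    proof (rule eq_vecI)
      fix i assume "i < dim_vec (l \<cdot>\<^sub>v Matrix.vec N v)"
      then show "(M *\<^sub>v Matrix.vec N v) $ i = (l \<cdot>\<^sub>v Matrix.vec N v) $ i"
        using ev by (simp add: mult_mat_vec_vec_nth[OF M])
    qed (use M in simp)
  qed
  then show "eigenvalue M l" unfolding eigenvalue_def by blast
qed

lemma quad_form_nonpos_if_eigenvalues_nonpos: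
  fixes M :: "real mat"
  assumes M: "M \<in> carrier_mat N N" and sym: "symmetric_on N (\<lambda>i j. M $$ (i, j))"
    and nonpos: "\<And>l. eigenvalue M l \<Longrightarrow> l \<le> 0"
  shows "quad_form N (\<lambda>i j. M $$ (i, j)) u \<le> 0"
proof (cases "N = 0")
  case True
  then show ?thesis by (simp add: quad_form_def)
next
  case False
  then obtain mu v where "\<And>i. i < N \<Longrightarrow> mat_vec N (\<lambda>i j. M $$ (i, j)) v i = mu * v i"
    and "\<exists>i<N. v i \<noteq> 0" and top: "quad_form N (\<lambda>i j. M $$ (i, j)) u \<le> mu * (\<Sum>i<N. (u i)\<^sup>2)"
    using exists_top_eigenvector[OF sym] by (metis less_one not_less)
  then have "mu \<le> 0"
    using nonpos eigenvalue_iff_mat_vec[OF M] by blast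
  then have "mu * (\<Sum>i<N. (u i)\<^sup>2) \<le> 0"
    by (simp add: mult_nonpos_nonneg sum_nonneg)
  with top show ?thesis by linarith
qed

lemma eigenvalue_0_if_entries_0:
  fixes M :: "real mat"
  assumes "M \<in> carrier_mat N N" and "\<And>i j. i < N \<Longrightarrow> j < N \<Longrightarrow> M $$ (i, j) = 0"
    and "eigenvalue M l"
  shows "l = 0"
  using assms eigenvalue_iff_mat_vec[of M N l] by (auto simp: mat_vec_def)

lemma poly_prod_linear_factors_eq_0_iff:
  "poly (\<Prod>l\<leftarrow>xs. [:- l, 1:]) x = 0 \<longleftrightarrow> x \<in> set (xs :: real list)"
  by (induction xs) auto

lemma stable_jac_eigenvalues:
  fixes M :: "real mat"
  assumes M: "M \<in> carrier_mat N N" and "stable_jac N M"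
  shows stable_jac_eigenvalue_nonpos: "eigenvalue M l \<Longrightarrow> l \<le> 0"
    and stable_jac_negative_eigenvalue: "N \<ge> 2 \<Longrightarrow> \<exists>l<0. eigenvalue M l"
proof -
  obtain ls :: "real list" where ls: "length ls = N - 1" "\<forall>l\<in>set ls. l < 0"
    and cp: "char_poly M = (\<Prod>l\<leftarrow>0 # ls. [:- l, 1:])"
    using \<open>stable_jac N M\<close> unfolding stable_jac_def by blast
  have ev: "eigenvalue M l \<longleftrightarrow> l \<in> set (0 # ls)" for l
    unfolding eigenvalue_root_char_poly[OF M] cp poly_prod_linear_factors_eq_0_iff ..
  show "eigenvalue M l \<Longrightarrow> l \<le> 0"
    using ls(2) ev by fastforce
  show "N \<ge> 2 \<Longrightarrow> \<exists>l<0. eigenvalue M l"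
    using ls ev by (cases ls) auto
qed

lemma mono_on_if_deriv_nonneg:
  fixes f :: "real \<Rightarrow> real"
  assumes "connected I"
    and deriv: "\<And>x. x \<in> I \<Longrightarrow> \<exists>D. (f has_real_derivative D) (at x) \<and> D \<ge> 0"
  shows "mono_on I f"
proof (rule mono_onI)
  fix x y assume "x \<in> I" "y \<in> I" "x \<le> y"
  then have sub: "{x..y} \<subseteq> I"
    using connected_contains_Icc[OF \<open>connected I\<close>] by blast
  show "f x \<le> f y"
  proof (rule DERIV_nonneg_imp_increasing_open[OF \<open>x \<le> y\<close>])
    show "continuous_on {x..y} f"
      using sub deriv by (intro continuous_at_imp_continuous_on) (blast intro: DERIV_isCont)
  next
    fix z assume "x < z" "z < y"
    with sub have "z \<in> I" by auto
    then show "\<exists>D. (f has_real_derivative D) (at z) \<and> D \<ge> 0" by (rule deriv)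
  qed
qed

lemma strict_mono_on_if_deriv_pos:
  fixes f :: "real \<Rightarrow> real"
  assumes "connected I"
    and deriv: "\<And>x. x \<in> I \<Longrightarrow> \<exists>D. (f has_real_derivative D) (at x) \<and> D > 0"
  shows "strict_mono_on I f"
proof (rule strict_mono_onI)
  fix x y assume "x \<in> I" "y \<in> I" "x < y"
  then have "{x..y} \<subseteq> I"
    using connected_contains_Icc[OF \<open>connected I\<close>] by blast
  then show "f x < f y"
    using deriv by (intro DERIV_pos_imp_increasing[OF \<open>x < y\<close>]) auto
qed

section \<open>The Jacobian of a phase-locked state\<close>

abbreviation jacobian_entries ::
  "nat \<Rightarrow> (nat \<Rightarrow> nat \<Rightarrow> real) \<Rightarrow> real \<Rightarrow> (nat \<Rightarrow> real) \<Rightarrow> nat \<Rightarrow> nat \<Rightarrow> real" where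
  "jacobian_entries N A K th \<equiv> \<lambda>i j. jacobian N A K th $$ (i, j)"

definition coupling :: "nat \<Rightarrow> (nat \<Rightarrow> nat \<Rightarrow> real) \<Rightarrow> (nat \<Rightarrow> real) \<Rightarrow> nat \<Rightarrow> real" where
  "coupling N A th i = (\<Sum>j<N. A i j * sin (th j - th i))"

lemma steady_state_iff_coupling:
  "steady_state N A om K th \<longleftrightarrow> (\<forall>i<N. om i + K * coupling N A th i = 0)"
  by (simp add: steady_state_def coupling_def)

lemma jacobian_carrier: "jacobian N A K th \<in> carrier_mat N N"
  by (simp add: jacobian_def)

lemma jacobian_index:
  "i < N \<Longrightarrow> j < N \<Longrightarrow> jacobian N A K th $$ (i, j) =
    (if i = j then - K * (\<Sum>l<N. A i l * cos (th i - th l)) else K * A i j * cos (th i - th j))"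
  by (simp add: jacobian_def)

lemma adjacency_symmetric: "adjacency_ok N A \<Longrightarrow> i < N \<Longrightarrow> j < N \<Longrightarrow> A i j = A j i"
  by (simp add: adjacency_ok_def)

lemma adjacency_nonneg: "adjacency_ok N A \<Longrightarrow> i < N \<Longrightarrow> j < N \<Longrightarrow> A i j \<ge> 0"
  unfolding adjacency_ok_def by (metis order.refl zero_le_one)

lemma jacobian_symmetric:
  assumes "adjacency_ok N A"
  shows "symmetric_on N (jacobian_entries N A K th)"
  unfolding symmetric_on_def
proof (intro allI impI)
  fix i j assume "i < N" "j < N"
  moreover have "cos (th i - th j) = cos (th j - th i)"
    by (metis cos_minus minus_diff_eq)
  ultimately show "jacobian N A K th $$ (i, j) = jacobian N A K th $$ (j, i)"
    using adjacency_symmetric[OF assms, of i j] by (simp add: jacobian_index)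
qed

lemma mat_vec_jacobian:
  assumes adj: "adjacency_ok N A" and i: "i < N"
  shows "mat_vec N (jacobian_entries N A K th) v i
       = K * (\<Sum>j<N. A i j * cos (th j - th i) * (v j - v i))"
proof -
  have cos_sym: "cos (th i - th j) = cos (th j - th i)" for j
    by (metis cos_minus minus_diff_eq)
  have "A i i = 0" using adj i by (simp add: adjacency_ok_def)
  then have "mat_vec N (jacobian_entries N A K th) v i
      = (\<Sum>j<N. K * (A i j * cos (th j - th i) * v j)
          - of_bool (j = i) * (K * (\<Sum>l<N. A i l * cos (th j - th l)) * v j))"
    unfolding mat_vec_def by (intro sum.cong refl) (auto simp: jacobian_index i cos_sym)
  also have "\<dots> = K * (\<Sum>j<N. A i j * cos (th j - th i) * v j)
      - K * (\<Sum>j<N. A i j * cos (th j - th i)) * v i"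
    using i by (simp add: sum_subtractf sum_distrib_left cos_sym)
  also have "\<dots> = K * (\<Sum>j<N. A i j * cos (th j - th i) * (v j - v i))"
    by (simp add: right_diff_distrib sum_subtractf sum_distrib_left sum_distrib_right algebra_simps)
  finally show ?thesis .
qed

lemma jacobian_quad_form_nonpos:
  assumes "adjacency_ok N A" and "stable_jac N (jacobian N A K th)"
  shows "quad_form N (jacobian_entries N A K th) u \<le> 0"
  using quad_form_nonpos_if_eigenvalues_nonpos[OF jacobian_carrier jacobian_symmetric[OF assms(1)]]
    stable_jac_eigenvalue_nonpos[OF jacobian_carrier assms(2)] by blast

lemma degree_sum_pos:
  assumes "N \<ge> 2" and adj: "adjacency_ok N A" and "graph_connected N A"
  shows "(\<Sum>i<N. degree N A i) > 0"
proof -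
  have "(\<lambda>x y. x < N \<and> y < N \<and> A x y = 1)\<^sup>*\<^sup>* 0 1"
    using assms unfolding graph_connected_def by simp
  then have "\<exists>y<N. A 0 y = 1"
    by (rule converse_rtranclpE) auto
  then obtain y where y: "y < N" "A 0 y = 1" by blast
  have "A 0 y \<le> degree N A 0"
    unfolding degree_def using y adj \<open>N \<ge> 2\<close>
    by (intro member_le_sum) (auto simp: adjacency_nonneg)
  then have "1 \<le> degree N A 0" using y by simp
  also have "\<dots> \<le> (\<Sum>i<N. degree N A i)"
    using \<open>N \<ge> 2\<close> adj by (intro member_le_sum) (auto simp: degree_def adjacency_nonneg intro!: sum_nonneg)
  finally show ?thesis by simp
qed

section \<open>The order parameter\<close>

lemma r_uni_pos_if_stable:
  assumes N2: "N \<ge> 2" and adj: "adjacency_ok N A" and conn: "graph_connected N A"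
    and "K > 0" and "stable_steady_state N A om K th"
  shows "r_uni N A th > 0"
proof -
  let ?J = "jacobian N A K th"
  define R where "R k = (\<Sum>j<N. A k j * cos (th k - th j))" for k
  have stable: "stable_jac N ?J"
    using assms by (simp add: stable_steady_state_def)
  note nonpos = jacobian_quad_form_nonpos[OF adj stable]
  have diag: "?J $$ (k, k) = - K * R k" if "k < N" for k
    using that by (simp add: jacobian_index R_def)
  have R_nonneg: "R k \<ge> 0" if "k < N" for k
    using nonpos[of "\<lambda>i. of_bool (i = k)"] that \<open>K > 0\<close>
    by (simp add: quad_form_unit diag zero_le_mult_iff)
  have "(\<Sum>k<N. R k) > 0"
  proof (rule ccontr)
    assume "\<not> (\<Sum>k<N. R k) > 0"
    moreover have "(\<Sum>k<N. R k) \<ge> 0"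
      using R_nonneg by (intro sum_nonneg) simp
    ultimately have "(\<Sum>k<N. R k) = 0" by linarith
    then have "R k = 0" if "k < N" for k
      using sum_nonneg_eq_0_iff[of "{..<N}" R] R_nonneg that by simp
    then have zero: "?J $$ (i, k) = 0" if "i < N" "k < N" for i k
      using entries_0_if_diag_0[OF jacobian_symmetric[OF adj] nonpos] that by (simp add: diag)
    obtain l where "l < 0" "eigenvalue ?J l"
      using stable_jac_negative_eigenvalue[OF jacobian_carrier stable N2] by blast
    with eigenvalue_0_if_entries_0[OF jacobian_carrier zero] show False by force
  qed
  moreover have "r_uni N A th = (\<Sum>k<N. R k) / (\<Sum>i<N. degree N A i)"
    by (simp add: r_uni_def R_def)
  ultimately show ?thesis
    using degree_sum_pos[OF N2 adj conn] by simp
qed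

lemma coupling_plus_jacobian_derivative_eq_0:
  assumes adj: "adjacency_ok N A" and I: "open I" "K \<in> I"
    and deriv: "\<And>i. i < N \<Longrightarrow> ((\<lambda>k. ths k i) has_real_derivative v i) (at K)"
    and steady: "\<And>k. k \<in> I \<Longrightarrow> steady_state N A om k (ths k)"
    and i: "i < N"
  shows "coupling N A (ths K) i + mat_vec N (jacobian_entries N A K (ths K)) v i = 0"
proof -
  \<comment> \<open>\<open>g\<close> vanishes on \<open>I\<close>, so its derivative at \<open>K\<close> is 0\<close>
  define g where "g k = om i + k * coupling N A (ths k) i" for k
  define D where "D = (\<Sum>j<N. A i j * cos (ths K j - ths K i) * (v j - v i))"
  have "((\<lambda>k. coupling N A (ths k) i) has_real_derivative D) (at K)"
    unfolding coupling_def D_def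
    by (rule DERIV_sum) (auto intro!: derivative_eq_intros deriv i)
  then have "(g has_real_derivative coupling N A (ths K) i + K * D) (at K)"
    unfolding g_def by (auto intro!: derivative_eq_intros)
  moreover have "(g has_real_derivative 0) (at K)"
  proof (rule has_field_derivative_transform_within_open[OF DERIV_const I])
    fix k assume "k \<in> I"
    then show "0 = g k"
      using steady i by (simp add: g_def steady_state_iff_coupling)
  qed
  ultimately have "coupling N A (ths K) i + K * D = 0"
    by (rule DERIV_unique)
  then show ?thesis
    by (simp add: mat_vec_jacobian[OF adj i] D_def)
qed

lemma coupling_weighted_double_sum:
  assumes adj: "adjacency_ok N A"
  shows "(\<Sum>i<N. \<Sum>j<N. A i j * sin (th j - th i) * (v i - v j))
       = 2 * (\<Sum>i<N. v i * coupling N A th i)"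
proof -
  have first: "(\<Sum>i<N. \<Sum>j<N. A i j * sin (th j - th i) * v i) = (\<Sum>i<N. v i * coupling N A th i)"
    by (simp add: coupling_def sum_distrib_left ac_simps)
  have "(\<Sum>i<N. \<Sum>j<N. A i j * sin (th j - th i) * v j)
      = (\<Sum>j<N. \<Sum>i<N. - (A j i * sin (th i - th j) * v j))"
  proof (subst sum.swap, intro sum.cong refl)
    fix i j assume "i \<in> {..<N}" "j \<in> {..<N}"
    then show "A j i * sin (th i - th j) * v i = - (A i j * sin (th j - th i) * v i)"
      using adjacency_symmetric[OF adj, of i j] by (simp add: sin_diff algebra_simps)
  qed
  also have "\<dots> = - (\<Sum>i<N. v i * coupling N A th i)"
    by (simp add: coupling_def sum_distrib_left sum_negf ac_simps)
  finally show ?thesis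
    using first by (simp add: right_diff_distrib sum_subtractf)
qed

lemma r_uni_has_derivative:
  assumes adj: "adjacency_ok N A"
    and deriv: "\<And>i. i < N \<Longrightarrow> ((\<lambda>k. ths k i) has_real_derivative v i) (at K)"
  shows "((\<lambda>k. r_uni N A (ths k)) has_real_derivative
           2 * (\<Sum>i<N. v i * coupling N A (ths K) i) / (\<Sum>i<N. degree N A i)) (at K)"
proof -
  have "((\<lambda>k. \<Sum>i<N. \<Sum>j<N. A i j * cos (ths k i - ths k j)) has_real_derivative
      (\<Sum>i<N. \<Sum>j<N. A i j * sin (ths K j - ths K i) * (v i - v j))) (at K)"
  proof (intro DERIV_sum)
    fix i j assume "i \<in> {..<N}" "j \<in> {..<N}"
    moreover have "- sin (ths K i - ths K j) = sin (ths K j - ths K i)"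
      by (metis minus_diff_eq sin_minus)
    ultimately show "((\<lambda>k. A i j * cos (ths k i - ths k j)) has_real_derivative
        A i j * sin (ths K j - ths K i) * (v i - v j)) (at K)"
      by (auto intro!: derivative_eq_intros deriv)
  qed
  then show ?thesis
    unfolding r_uni_def coupling_weighted_double_sum[OF adj] by (rule DERIV_cdivide)
qed

lemma r_uni_has_nonneg_derivative:
  assumes N2: "N \<ge> 2" and adj: "adjacency_ok N A" and conn: "graph_connected N A"
    and I: "open I" "K \<in> I"
    and deriv: "\<And>i. i < N \<Longrightarrow> ((\<lambda>k. ths k i) has_real_derivative v i) (at K)"
    and stable: "\<And>k. k \<in> I \<Longrightarrow> stable_steady_state N A om k (ths k)"
  shows "\<exists>D. ((\<lambda>k. r_uni N A (ths k)) has_real_derivative D) (at K)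
           \<and> D \<ge> 0 \<and> ((\<exists>i<N. om i \<noteq> 0) \<longrightarrow> D > 0)"
proof -
  let ?J = "jacobian_entries N A K (ths K)"
  have "stable_jac N (jacobian N A K (ths K))"
    using stable I by (simp add: stable_steady_state_def)
  note nonpos = jacobian_quad_form_nonpos[OF adj this]
  have "steady_state N A om k (ths k)" if "k \<in> I" for k
    using stable[OF that] by (simp add: stable_steady_state_def)
  from coupling_plus_jacobian_derivative_eq_0[OF adj I deriv this]
  have coupling_eq: "coupling N A (ths K) i = - mat_vec N ?J v i" if "i < N" for i
    using that by (simp add: eq_neg_iff_add_eq_0)
  \<comment> \<open>the derivative of \<open>r_uni\<close> is \<open>-2 v\<^sup>T J v / \<Sum> degree\<close>\<close>
  have sum_eq: "(\<Sum>i<N. v i * coupling N A (ths K) i) = - quad_form N ?J v"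
    by (simp add: quad_form_def coupling_eq sum_negf)
  define D where "D = 2 * (\<Sum>i<N. v i * coupling N A (ths K) i) / (\<Sum>i<N. degree N A i)"
  have Sd: "(\<Sum>i<N. degree N A i) > 0"
    by (rule degree_sum_pos[OF N2 adj conn])
  have "D \<ge> 0"
    using nonpos[of v] Sd by (simp add: D_def sum_eq divide_nonpos_pos)
  moreover have "D > 0" if "\<exists>i<N. om i \<noteq> 0"
  proof (rule ccontr)
    assume "\<not> D > 0"
    with \<open>D \<ge> 0\<close> Sd have "quad_form N ?J v = 0"
      by (simp add: D_def sum_eq)
    then have "coupling N A (ths K) i = 0" if "i < N" for i
      using mat_vec_eq_0_if_quad_form_max[OF jacobian_symmetric[OF adj] nonpos] coupling_eq that
      by simp
    then have "om i = 0" if "i < N" for i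
      using stable[OF I(2)] that by (simp add: stable_steady_state_def steady_state_iff_coupling)
    with \<open>\<exists>i<N. om i \<noteq> 0\<close> show False by blast
  qed
  moreover have "((\<lambda>k. r_uni N A (ths k)) has_real_derivative D) (at K)"
    unfolding D_def using deriv by (rule r_uni_has_derivative[OF adj])
  ultimately show ?thesis by (intro exI[of _ D]) simp
qed

lemma r_uni_mono_on_stable_branch:
  assumes N2: "N \<ge> 2" and adj: "adjacency_ok N A" and conn: "graph_connected N A"
    and I: "open I" "connected I"
    and deriv: "\<forall>i<N. \<exists>th'. \<forall>K\<in>I. ((\<lambda>k. ths k i) has_real_derivative th' K) (at K)"
    and stable: "\<forall>K\<in>I. stable_steady_state N A om K (ths K)"
  shows "mono_on I (\<lambda>K. r_uni N A (ths K))
    \<and> ((\<exists>i<N. om i \<noteq> 0) \<longrightarrow> strict_mono_on I (\<lambda>K. r_uni N A (ths K))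
         \<and> (\<forall>K\<in>I. \<exists>D. ((\<lambda>k. r_uni N A (ths k)) has_real_derivative D) (at K) \<and> D > 0))"
proof -
  have "\<forall>i. \<exists>th'. i < N \<longrightarrow> (\<forall>K\<in>I. ((\<lambda>k. ths k i) has_real_derivative th' K) (at K))"
    using deriv by blast
  then obtain th' where th': "\<forall>i. i < N \<longrightarrow>
      (\<forall>K\<in>I. ((\<lambda>k. ths k i) has_real_derivative th' i K) (at K))"
    by (metis choice)
  have r_uni_deriv: "\<exists>D. ((\<lambda>k. r_uni N A (ths k)) has_real_derivative D) (at K)
      \<and> D \<ge> 0 \<and> ((\<exists>i<N. om i \<noteq> 0) \<longrightarrow> D > 0)" if K: "K \<in> I" for K
  proof -
    have "\<And>i. i < N \<Longrightarrow> ((\<lambda>k. ths k i) has_real_derivative th' i K) (at K)"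
      using th' K by blast
    moreover have "\<And>k. k \<in> I \<Longrightarrow> stable_steady_state N A om k (ths k)"
      using stable by blast
    ultimately show ?thesis
      by (rule r_uni_has_nonneg_derivative[OF N2 adj conn I(1) K])
  qed
  have "mono_on I (\<lambda>K. r_uni N A (ths K))"
  proof (rule mono_on_if_deriv_nonneg[OF I(2)])
    fix K assume "K \<in> I"
    then show "\<exists>D. ((\<lambda>k. r_uni N A (ths k)) has_real_derivative D) (at K) \<and> D \<ge> 0"
      using r_uni_deriv by blast
  qed
  moreover have "\<exists>D. ((\<lambda>k. r_uni N A (ths k)) has_real_derivative D) (at K) \<and> D > 0"
    if "\<exists>i<N. om i \<noteq> 0" "K \<in> I" for K
    using r_uni_deriv[OF that(2)] that(1) by blast
  ultimately show ?thesis
    using strict_mono_on_if_deriv_pos[OF I(2)] by blast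
qed

theorem theorem2:
  fixes N :: nat and A :: "nat \<Rightarrow> nat \<Rightarrow> real" and om :: "nat \<Rightarrow> real"
  assumes N2: "N \<ge> 2"
    and adj: "adjacency_ok N A"
    and conn: "graph_connected N A"
    and om_sum: "(\<Sum>i<N. om i) = 0"
  shows "(\<forall>K th. K > 0 \<longrightarrow> stable_steady_state N A om K th \<longrightarrow> r_uni N A th > 0)
    \<and> (\<forall>(I :: real set) (ths :: real \<Rightarrow> nat \<Rightarrow> real).
         open I \<and> connected I \<and> I \<noteq> {} \<and> I \<subseteq> {0<..}
         \<and> (\<forall>i<N. \<exists>th' :: real \<Rightarrow> real.
               (\<forall>K\<in>I. ((\<lambda>k. ths k i) has_real_derivative th' K) (at K))
               \<and> continuous_on I th')
         \<and> (\<forall>K\<in>I. stable_steady_state N A om K (ths K))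
         \<longrightarrow> mono_on I (\<lambda>K. r_uni N A (ths K))
           \<and> ((\<exists>i<N. om i \<noteq> 0) \<longrightarrow>
                strict_mono_on I (\<lambda>K. r_uni N A (ths K))
                \<and> (\<forall>K\<in>I. \<exists>D. ((\<lambda>k. r_uni N A (ths k)) has_real_derivative D) (at K) \<and> D > 0)))"
proof ((rule conjI; intro allI impI), goal_cases)
  case (1 K th)
  then show ?case by (intro r_uni_pos_if_stable[OF N2 adj conn])
next
  case (2 I ths)
  then have "\<forall>i<N. \<exists>th'. \<forall>K\<in>I. ((\<lambda>k. ths k i) has_real_derivative th' K) (at K)"
    by blast
  with 2 show ?case
    by (intro r_uni_mono_on_stable_branch[OF N2 adj conn]) auto
qed

end
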